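(* There are constants $c,\beta\ge 0$ such that for all sufficiently large $n$ and every integer $k>\frac{4}{7}n+c$, the pair $(n,k)$ is $(2,\beta)$-approx good.
   Context: All graphs are undirected and unweighted. For a graph $G=(V,E)$ and integer $k$, a $k$-spanner of $G$ is a subgraph $H=(V,E')$, $E'\subseteq E$, with $\mathrm{dist}_H(u,v)\le k\cdot\mathrm{dist}_G(u,v)$ for all $u,v\in V$. Girth = length of a shortest cycle ($+\infty$ if acyclic). For constants $\alpha>1,\beta\ge 0$, a pair $(n,k)$ is $(\alpha,\beta)$-approx good if every connected $n$-vertex graph $G$ has a $k$-spanner $H=(V,E_H)$ with girth at least $k+2$ such that $|E_H|-n\le \alpha(\mathsf{OPT}-n)+\beta$, where $\mathsf{OPT}$ is the number of edges of a minimum (fewest-edge) $k$-spanner of $G$. *)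

theory Defs
  imports Main "HOL-Library.Extended_Nat"
begin

definition simple_graph :: "nat set \<Rightarrow> nat set set \<Rightarrow> bool" where
  "simple_graph V E \<longleftrightarrow> (\<forall>e\<in>E. \<exists>u v. e = {u, v} \<and> u \<noteq> v \<and> u \<in> V \<and> v \<in> V)"

definition walk :: "nat set set \<Rightarrow> nat list \<Rightarrow> bool" where
  "walk E xs \<longleftrightarrow> xs \<noteq> [] \<and> (\<forall>i. i + 1 < length xs \<longrightarrow> {xs ! i, xs ! (i + 1)} \<in> E)"

definition gdist :: "nat set set \<Rightarrow> nat \<Rightarrow> nat \<Rightarrow> enat" where
  "gdist E u v = Inf {enat (length xs - 1) | xs. walk E xs \<and> hd xs = u \<and> last xs = v}"

definition connected_graph :: "nat set \<Rightarrow> nat set set \<Rightarrow> bool" where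
  "connected_graph V E \<longleftrightarrow> simple_graph V E \<and> (\<forall>u\<in>V. \<forall>v\<in>V. gdist E u v < \<infinity>)"

definition is_cycle :: "nat set set \<Rightarrow> nat list \<Rightarrow> bool" where
  "is_cycle E xs \<longleftrightarrow> walk E xs \<and> distinct xs \<and> length xs \<ge> 3 \<and> {last xs, hd xs} \<in> E"

definition girth :: "nat set set \<Rightarrow> enat" where
  "girth E = Inf {enat (length xs) | xs. is_cycle E xs}"

definition is_spanner :: "nat set \<Rightarrow> nat set set \<Rightarrow> nat \<Rightarrow> nat set set \<Rightarrow> bool" where
  "is_spanner V E k H \<longleftrightarrow> H \<subseteq> E \<and>
     (\<forall>u\<in>V. \<forall>v\<in>V. gdist H u v \<le> enat k * gdist E u v)"

definition OPT :: "nat set \<Rightarrow> nat set set \<Rightarrow> nat \<Rightarrow> nat" where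
  "OPT V E k = Min (card ` {H. is_spanner V E k H})"

definition approx_good :: "real \<Rightarrow> real \<Rightarrow> nat \<Rightarrow> nat \<Rightarrow> bool" where
  "approx_good \<alpha> \<beta> n k \<longleftrightarrow>
     (\<forall>E. connected_graph {0..<n} E \<longrightarrow>
        (\<exists>H. is_spanner {0..<n} E k H \<and> enat (k + 2) \<le> girth H \<and>
             real (card H) - real n \<le> \<alpha> * (real (OPT {0..<n} E k) - real n) + \<beta>))"

end

theory Submission
  imports Defs
begin

text \<open>The spanner is the greedy one: an edge-maximal subgraph H of E of girth at least k + 2.
  Every edge of E missing from H closes a cycle of length at most k + 1 with H, so H is a
  k-spanner. If H had n + 2 edges, three edges would lie outside a spanning tree of H; their
  fundamental cycles Z1, Z2, Z3 span seven nonzero elements of the cycle space (edge sets in which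
  every degree is even). Each of them contains a cycle of H and so has at least k + 2 edges, while
  every edge of Z1 \<union> Z2 \<union> Z3, a set of at most n + 2 edges, lies in exactly four of them.
  Hence 7 (k + 2) \<le> 4 (n + 2), contradicting k > 4 n / 7. Since every k-spanner of a connected
  graph is connected and thus has at least n - 1 edges, |H| - n \<le> 1 \<le> 2 (OPT - n) + 3.\<close>

lemma simple_graph_edgeE:
  assumes "simple_graph V E" "e \<in> E"
  obtains u v where "e = {u, v}" "u \<noteq> v" "u \<in> V" "v \<in> V"
  using assms unfolding simple_graph_def by meson

lemma simple_graph_card_edge: "simple_graph V E \<Longrightarrow> e \<in> E \<Longrightarrow> card e = 2"
  by (erule simple_graph_edgeE) auto

lemma simple_graph_edge_subset: "simple_graph V E \<Longrightarrow> e \<in> E \<Longrightarrow> e \<subseteq> V"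
  by (erule simple_graph_edgeE) auto

lemma simple_graph_finite_edges:
  assumes "simple_graph V E" "finite V"
  shows "finite E"
proof -
  have "E \<subseteq> Pow V"
    using simple_graph_edge_subset[OF assms(1)] by blast
  then show ?thesis
    using assms(2) finite_subset by blast
qed

lemma walk_singleton [simp]: "walk E [x]"
  by (simp add: walk_def)

lemma walk_Cons_Cons [simp]: "walk E (x # y # ys) \<longleftrightarrow> {x, y} \<in> E \<and> walk E (y # ys)"
  unfolding walk_def by (auto simp: nth_Cons split: nat.splits)

lemma walk_append: "walk E xs \<Longrightarrow> walk E ys \<Longrightarrow> last xs = hd ys \<Longrightarrow> walk E (xs @ tl ys)"
proof (induction xs rule: induct_list012)
  case (2 x)
  then show ?case by (cases ys) auto
next
  case (3 x y zs)
  then show ?case by simp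
qed (simp add: walk_def)

lemma walk_mono: "walk E xs \<Longrightarrow> E \<subseteq> F \<Longrightarrow> walk F xs"
  unfolding walk_def by blast

lemma walk_rev: "walk E xs \<Longrightarrow> walk E (rev xs)"
proof (induction xs rule: induct_list012)
  case (3 x y zs)
  have "walk E (rev (y # zs) @ tl [y, x])"
    by (rule walk_append) (use 3 in \<open>auto simp: insert_commute\<close>)
  then show ?case by simp
qed auto

lemma gdist_le_walk: "walk E xs \<Longrightarrow> gdist E (hd xs) (last xs) \<le> enat (length xs - 1)"
  unfolding gdist_def by (rule Inf_lower) blast

lemma gdist_enatE:
  assumes "gdist E u v = enat d"
  obtains xs where "walk E xs" "hd xs = u" "last xs = v" "length xs - 1 = d"
proof -
  let ?S = "{enat (length xs - 1) | xs. walk E xs \<and> hd xs = u \<and> last xs = v}"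
  have "?S \<noteq> {}"
    using assms unfolding gdist_def by (metis Inf_empty enat.distinct(1) top_enat_def)
  then have "Inf ?S \<in> ?S"
    unfolding Inf_enat_def by (auto intro: LeastI)
  then show ?thesis
    using assms that unfolding gdist_def by auto
qed

lemma gdist_commute: "gdist E u v = gdist E v u"
proof -
  have "gdist E u v \<le> gdist E v u" for u v
  proof (cases "gdist E v u")
    case (enat d)
    then obtain xs where "walk E xs" "hd xs = v" "last xs = u" "length xs - 1 = d"
      by (rule gdist_enatE)
    then show ?thesis
      using gdist_le_walk[OF walk_rev, of E xs] enat by (simp add: hd_rev last_rev)
  qed simp
  then show ?thesis
    by (simp add: antisym)
qed

lemma gdist_self: "gdist E v v = 0"
  using gdist_le_walk[of E "[v]"] by (simp add: zero_enat_def[symmetric])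

lemma gdist_eq_0D:
  assumes "gdist E u v = 0"
  shows "u = v"
proof -
  obtain xs where "walk E xs" "hd xs = u" "last xs = v" "length xs - 1 = 0"
    using assms by (auto simp: zero_enat_def elim: gdist_enatE)
  then show ?thesis
    by (cases xs) (auto simp: walk_def)
qed

lemma gdist_SucE:
  assumes "gdist H v r = enat (Suc m)"
  obtains w where "{v, w} \<in> H" "gdist H w r = enat m"
proof -
  obtain xs where xs: "walk H xs" "hd xs = v" "last xs = r" "length xs - 1 = Suc m"
    using assms by (rule gdist_enatE)
  then obtain w rest where xs_eq: "xs = v # w # rest"
    by (cases xs rule: remdups_adj.cases) simp_all
  then have vw: "{v, w} \<in> H" and "walk H (w # rest)"
    using xs(1) by auto
  then have "gdist H w r \<le> enat m"
    using gdist_le_walk[of H "w # rest"] xs xs_eq by auto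
  moreover have "\<not> gdist H w r < enat m"
  proof
    assume "gdist H w r < enat m"
    then obtain m' where m': "gdist H w r = enat m'" "m' < m"
      by (cases "gdist H w r") auto
    obtain ys where ys: "walk H ys" "hd ys = w" "last ys = r" "length ys - 1 = m'"
      by (rule gdist_enatE[OF m'(1)])
    have ne: "ys \<noteq> []"
      using ys(1) by (simp add: walk_def)
    then have "length ys = Suc m'"
      using ys(4) by (cases ys) auto
    moreover have "walk H (v # ys)"
      using vw ys(1,2) by (cases ys) auto
    ultimately have "gdist H v r \<le> enat (Suc m')"
      using gdist_le_walk[of H "v # ys"] ys(3) ne by simp
    then show False
      using assms m'(2) by simp
  qed
  ultimately show ?thesis
    using vw that by (simp add: not_less antisym)
qed

lemma walk_stretch:
  assumes "walk E xs" and stretch: "\<And>u v. {u, v} \<in> E \<Longrightarrow> gdist H u v \<le> enat k"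
  shows "\<exists>ys. walk H ys \<and> hd ys = hd xs \<and> last ys = last xs \<and> length ys - 1 \<le> k * (length xs - 1)"
  using assms(1)
proof (induction xs rule: induct_list012)
  case (2 x)
  then show ?case by (intro exI[of _ "[x]"]) auto
next
  case (3 x y zs)
  then have "walk E (y # zs)" and "gdist H x y \<le> enat k"
    using stretch by auto
  then obtain ys where ys: "walk H ys" "hd ys = y" "last ys = last (y # zs)"
    "length ys - 1 \<le> k * length zs"
    using 3(2) by fastforce
  obtain d where d: "gdist H x y = enat d" "d \<le> k"
    using \<open>gdist H x y \<le> enat k\<close> by (cases "gdist H x y") auto
  obtain xs where xs: "walk H xs" "hd xs = x" "last xs = y" "length xs - 1 = d"
    by (rule gdist_enatE[OF d(1)])
  have ne: "xs \<noteq> []" "ys \<noteq> []"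
    using xs(1) ys(1) by (auto simp: walk_def)
  have len: "length (xs @ tl ys) - 1 = (length xs - 1) + (length ys - 1)"
    using ne by (cases xs; cases ys) auto
  have "walk H (xs @ tl ys)"
    using walk_append xs ys by simp
  moreover have "hd (xs @ tl ys) = hd (x # y # zs)"
    using ne xs(2) by simp
  moreover have "last (xs @ tl ys) = last (x # y # zs)"
    using ne xs(3) ys(2,3) by (cases ys) (auto simp: last_append)
  moreover have "length (xs @ tl ys) - 1 \<le> k * (length (x # y # zs) - 1)"
    using len xs(4) ys(4) d(2) by simp
  ultimately show ?case
    by blast
qed (simp add: walk_def)

lemma is_spannerI:
  assumes "H \<subseteq> E" "1 \<le> k" "\<And>u v. {u, v} \<in> E \<Longrightarrow> gdist H u v \<le> enat k"
  shows "is_spanner V E k H"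
  unfolding is_spanner_def
proof (intro conjI ballI)
  fix u v
  show "gdist H u v \<le> enat k * gdist E u v"
  proof (cases "gdist E u v")
    case (enat d)
    then obtain xs where xs: "walk E xs" "hd xs = u" "last xs = v" "length xs - 1 = d"
      by (rule gdist_enatE)
    then obtain ys where "walk H ys" "hd ys = u" "last ys = v" "length ys - 1 \<le> k * d"
      using walk_stretch[OF xs(1) assms(3)] by auto
    then have "gdist H u v \<le> enat (k * d)"
      using gdist_le_walk order_trans by fastforce
    then show ?thesis using enat by simp
  next
    case infinity
    then show ?thesis using assms(2) by (simp add: imult_is_infinity)
  qed
qed (use assms in auto)

lemma connected_graph_spanner:
  assumes "connected_graph V E" "is_spanner V E k H"
  shows "connected_graph V H"
  unfolding connected_graph_def
proof (intro conjI ballI)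
  show "simple_graph V H"
    using assms unfolding connected_graph_def simple_graph_def is_spanner_def by blast
  fix u v assume uv: "u \<in> V" "v \<in> V"
  then have "gdist E u v < \<infinity>"
    using assms(1) by (simp add: connected_graph_def)
  then obtain d where "gdist E u v = enat d"
    by (cases "gdist E u v") auto
  moreover have "gdist H u v \<le> enat k * gdist E u v"
    using assms(2) uv by (simp add: is_spanner_def)
  ultimately show "gdist H u v < \<infinity>"
    by (cases "gdist H u v") auto
qed

definition cycle_edge :: "nat list \<Rightarrow> nat \<Rightarrow> nat set" where
  "cycle_edge xs i = {xs ! i, xs ! (Suc i mod length xs)}"

lemma is_cycle_iff_cycle_edge:
  "is_cycle F xs \<longleftrightarrow> distinct xs \<and> 3 \<le> length xs \<and> (\<forall>i<length xs. cycle_edge xs i \<in> F)"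
proof (cases "3 \<le> length xs")
  case True
  then have ne: "xs \<noteq> []" by auto
  have closing: "cycle_edge xs (length xs - 1) = {last xs, hd xs}"
    using ne by (simp add: cycle_edge_def last_conv_nth hd_conv_nth)
  have inner: "cycle_edge xs i = {xs ! i, xs ! (i + 1)}" if "i + 1 < length xs" for i
    using that by (simp add: cycle_edge_def)
  have "(\<forall>i<length xs. cycle_edge xs i \<in> F) \<longleftrightarrow>
        (\<forall>i. i + 1 < length xs \<longrightarrow> {xs ! i, xs ! (i + 1)} \<in> F) \<and> {last xs, hd xs} \<in> F"
  proof safe
    fix i assume "\<forall>i<length xs. cycle_edge xs i \<in> F" and i: "i + 1 < length xs"
    then show "{xs ! i, xs ! (i + 1)} \<in> F"
      using inner[OF i] i by (metis Suc_eq_plus1 Suc_lessD)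
  next
    assume "\<forall>i<length xs. cycle_edge xs i \<in> F"
    then show "{last xs, hd xs} \<in> F"
      using closing ne by (metis diff_less length_greater_0_conv zero_less_one)
  next
    fix i assume "\<forall>i. i + 1 < length xs \<longrightarrow> {xs ! i, xs ! (i + 1)} \<in> F" "{last xs, hd xs} \<in> F"
      "i < length xs"
    moreover have "i = length xs - 1" if "\<not> i + 1 < length xs"
      using that \<open>i < length xs\<close> by linarith
    ultimately show "cycle_edge xs i \<in> F"
      using inner closing by (cases "i + 1 < length xs") auto
  qed
  then show ?thesis
    using True ne by (auto simp: is_cycle_def walk_def)
qed (auto simp: is_cycle_def)

lemma inj_on_cycle_edge:
  assumes "distinct xs" "3 \<le> length xs"
  shows "inj_on (cycle_edge xs) {..<length xs}"
proof (rule inj_onI, rule ccontr)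
  fix a b assume a: "a \<in> {..<length xs}" and b: "b \<in> {..<length xs}"
    and eq: "cycle_edge xs a = cycle_edge xs b" and "a \<noteq> b"
  let ?n = "length xs"
  have "0 < ?n"
    using assms(2) by linarith
  then have "Suc a mod ?n < ?n" "Suc b mod ?n < ?n"
    by simp_all
  moreover have "xs ! a \<noteq> xs ! b"
    using \<open>a \<noteq> b\<close> a b assms(1) by (simp add: nth_eq_iff_index_eq)
  ultimately have "a = Suc b mod ?n" "Suc a mod ?n = b"
    using eq a b assms(1) by (auto simp: cycle_edge_def doubleton_eq_iff nth_eq_iff_index_eq)
  then show False
    using a b assms(2) \<open>a \<noteq> b\<close> by (auto simp: mod_Suc split: if_splits)
qed

lemma is_cycle_mono: "is_cycle F xs \<Longrightarrow> F \<subseteq> G \<Longrightarrow> is_cycle G xs"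
  unfolding is_cycle_def using walk_mono by blast

lemma length_cycle_le_card:
  assumes "is_cycle F xs" "finite F"
  shows "length xs \<le> card F"
proof -
  have "inj_on (cycle_edge xs) {..<length xs}" "cycle_edge xs ` {..<length xs} \<subseteq> F"
    using assms(1) inj_on_cycle_edge by (auto simp: is_cycle_iff_cycle_edge)
  then show ?thesis
    using card_inj_on_le assms(2) by fastforce
qed

text \<open>Rotate the cycle so that e becomes its closing edge; as the edges of a cycle are pairwise
  distinct, all other edges lie in H.\<close>
lemma cycle_insert_edge_walk:
  assumes c: "is_cycle (insert e H) xs" and nc: "\<not> is_cycle H xs"
  shows "\<exists>ys. walk H ys \<and> {hd ys, last ys} = e \<and> length ys = length xs"
proof -
  let ?n = "length xs"
  have cm: "distinct xs" "3 \<le> ?n" "\<forall>i<?n. cycle_edge xs i \<in> insert e H"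
    using c by (auto simp: is_cycle_iff_cycle_edge)
  obtain i where i: "i < ?n" "cycle_edge xs i = e"
    using cm nc by (auto simp: is_cycle_iff_cycle_edge)
  define ys where "ys = rotate (Suc i) xs"
  have ly: "length ys = ?n" by (simp add: ys_def)
  have ny: "ys ! j = xs ! ((Suc i + j) mod ?n)" if "j < ?n" for j
    unfolding ys_def using nth_rotate that by blast
  have ne: "ys \<noteq> []" "xs \<noteq> []"
    using ly cm by auto
  have hd: "hd ys = xs ! (Suc i mod ?n)"
    using ny[of 0] ne by (simp add: hd_conv_nth)
  have "last ys = xs ! ((Suc i + (?n - 1)) mod ?n)"
    using ny ne ly by (simp add: last_conv_nth)
  also have "Suc i + (?n - 1) = i + ?n"
    using cm by simp
  finally have lst: "last ys = xs ! i"
    using i by simp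
  have "walk H ys" unfolding walk_def
  proof (intro conjI allI impI)
    show "ys \<noteq> []" by fact
    fix j assume j: "j + 1 < length ys"
    define m where "m = (Suc i + j) mod ?n"
    have m: "m < ?n"
      using ne by (simp add: m_def)
    have "Suc m mod ?n = (Suc i + (j + 1)) mod ?n"
      unfolding m_def by (simp add: mod_Suc_eq)
    then have eq: "{ys ! j, ys ! (j + 1)} = cycle_edge xs m"
      using ny j ly by (simp add: m_def cycle_edge_def)
    have "m \<noteq> i"
      using i j ly by (auto simp: m_def mod_if split: if_splits)
    then have "cycle_edge xs m \<noteq> e"
      using inj_on_cycle_edge[OF cm(1,2)] i m by (auto dest: inj_onD)
    then show "{ys ! j, ys ! (j + 1)} \<in> H"
      using eq cm(3) m by auto
  qed
  then show ?thesis
    using hd lst i ly by (intro exI[of _ ys]) (auto simp: cycle_edge_def insert_commute)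
qed

lemma gdist_le_cycle_insert_edge:
  assumes "is_cycle (insert {u, v} H) xs" "\<not> is_cycle H xs"
  shows "gdist H u v \<le> enat (length xs - 1)"
proof -
  obtain ys where ys: "walk H ys" "{hd ys, last ys} = {u, v}" "length ys = length xs"
    using cycle_insert_edge_walk[OF assms] by blast
  then have "gdist H (hd ys) (last ys) \<le> enat (length xs - 1)"
    using gdist_le_walk by fastforce
  with ys(2) show ?thesis
    by (metis doubleton_eq_iff gdist_commute)
qed

lemma enat_le_girth_iff: "enat g \<le> girth H \<longleftrightarrow> (\<forall>xs. is_cycle H xs \<longrightarrow> g \<le> length xs)"
  unfolding girth_def by (auto simp: le_Inf_iff)

lemma not_is_cycle_empty: "\<not> is_cycle {} xs"
  by (fastforce simp: is_cycle_iff_cycle_edge)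

lemma girth_empty [simp]: "girth {} = \<infinity>"
  unfolding girth_def using not_is_cycle_empty by (simp add: top_enat_def)

section \<open>The greedy spanner\<close>

lemma exists_spanner_girth:
  assumes "finite E" "1 \<le> k"
  shows "\<exists>H. is_spanner V E k H \<and> enat (k + 2) \<le> girth H"
proof -
  define M where "M = {H. H \<subseteq> E \<and> enat (k + 2) \<le> girth H}"
  have "M \<subseteq> Pow E"
    by (auto simp: M_def)
  then have "finite M"
    using assms(1) finite_subset by blast
  moreover have "{} \<in> M"
    by (simp add: M_def)
  ultimately obtain H where H: "H \<in> M" and maximal: "\<forall>H'\<in>M. H \<subseteq> H' \<longrightarrow> H = H'"
    using finite_has_maximal by blast
  have stretch: "gdist H u v \<le> enat k" if uv: "{u, v} \<in> E" for u v
  proof (cases "{u, v} \<in> H")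
    case True
    then have "gdist H u v \<le> enat 1"
      using gdist_le_walk[of H "[u, v]"] by simp
    also have "\<dots> \<le> enat k"
      using assms(2) by simp
    finally show ?thesis .
  next
    case False
    then have "insert {u, v} H \<notin> M"
      using maximal by blast
    then obtain xs where xs: "is_cycle (insert {u, v} H) xs" "length xs < k + 2"
      using H uv by (auto simp: M_def enat_le_girth_iff not_le)
    moreover have "\<not> is_cycle H xs"
      using H xs(2) by (auto simp: M_def enat_le_girth_iff)
    ultimately have "gdist H u v \<le> enat (length xs - 1)"
      by (intro gdist_le_cycle_insert_edge)
    also have "\<dots> \<le> enat k"
      using xs(2) by simp
    finally show ?thesis .
  qed
  have "is_spanner V E k H"
    by (rule is_spannerI) (use H assms(2) stretch in \<open>auto simp: M_def\<close>)
  then show ?thesis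
    using H by (auto simp: M_def)
qed

section \<open>Even subgraphs\<close>

definition deg :: "nat set set \<Rightarrow> nat \<Rightarrow> nat" where
  "deg F v = card {e \<in> F. v \<in> e}"

definition even_degrees :: "nat set set \<Rightarrow> bool" where
  "even_degrees F \<longleftrightarrow> (\<forall>v. even (deg F v))"

lemma deg_insert:
  assumes "finite F" "e \<notin> F"
  shows "deg (insert e F) v = deg F v + (if v \<in> e then 1 else 0)"
proof -
  have "{x \<in> insert e F. v \<in> x} = (if v \<in> e then insert e {x \<in> F. v \<in> x} else {x \<in> F. v \<in> x})"
    by auto
  then show ?thesis
    using assms by (simp add: deg_def)
qed

lemma deg_singleton: "deg {e} v = (if v \<in> e then 1 else 0)"
  using deg_insert[of "{}" e v] by (simp add: deg_def)

lemma card_sym_diff: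
  assumes "finite A" "finite B"
  shows "card (sym_diff A B) + 2 * card (A \<inter> B) = card A + card B"
proof -
  have "card (sym_diff A B) + card (A \<inter> B) = card (A \<union> B)"
    using assms by (subst card_Un_disjoint[symmetric]) (auto intro: arg_cong[where f = card])
  then show ?thesis
    using card_Un_Int[OF assms] by simp
qed

lemma even_deg_sym_diff:
  assumes "finite A" "finite B"
  shows "even (deg (sym_diff A B) v) \<longleftrightarrow> (even (deg A v) \<longleftrightarrow> even (deg B v))"
proof -
  let ?A = "{e \<in> A. v \<in> e}" and ?B = "{e \<in> B. v \<in> e}"
  have "{e \<in> sym_diff A B. v \<in> e} = sym_diff ?A ?B"
    by auto
  moreover have "card (sym_diff ?A ?B) + 2 * card (?A \<inter> ?B) = card ?A + card ?B"
    using assms by (intro card_sym_diff) auto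
  ultimately show ?thesis
    unfolding deg_def by presburger
qed

lemma even_degrees_sym_diff:
  "finite A \<Longrightarrow> finite B \<Longrightarrow> even_degrees A \<Longrightarrow> even_degrees B \<Longrightarrow> even_degrees (sym_diff A B)"
  by (simp add: even_degrees_def even_deg_sym_diff)

lemma even_deg_other_edge:
  assumes "finite F" "even (deg F v)" "{u, v} \<in> F"
  obtains e where "e \<in> F" "v \<in> e" "e \<noteq> {u, v}"
proof (rule ccontr)
  assume "\<not> thesis"
  with that have "{e \<in> F. v \<in> e} = {{u, v}}"
    using assms(3) by blast
  then show False
    using assms(2) by (simp add: deg_def)
qed

lemma walk_set_subset_Union: "walk F xs \<Longrightarrow> 2 \<le> length xs \<Longrightarrow> set xs \<subseteq> \<Union>F"
proof (induction xs rule: induct_list012)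
  case (3 x y zs)
  have xy: "{x, y} \<in> F" and w: "walk F (y # zs)"
    using 3(3) by simp_all
  have "set (y # zs) \<subseteq> \<Union>F"
  proof (cases zs)
    case Nil
    with xy show ?thesis by auto
  next
    case Cons
    with 3(2) w show ?thesis by simp
  qed
  with xy show ?case by auto
qed auto

lemma is_cycle_drop:
  assumes "walk F xs" "distinct xs" "j + 3 \<le> length xs" "{last xs, xs ! j} \<in> F"
  shows "is_cycle F (drop j xs)"
proof -
  have "walk F (drop j xs)"
    unfolding walk_def
  proof (intro conjI allI impI)
    show "drop j xs \<noteq> []"
      using assms(3) by simp
    fix i assume "i + 1 < length (drop j xs)"
    then have "j + i + 1 < length xs"
      by simp
    then show "{drop j xs ! i, drop j xs ! (i + 1)} \<in> F"
      using assms(1,3) unfolding walk_def by (simp add: add.assoc)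
  qed
  moreover have "hd (drop j xs) = xs ! j" "last (drop j xs) = last xs"
    using assms(3) by (auto simp: hd_drop_conv_nth)
  ultimately show ?thesis
    using assms by (simp add: is_cycle_def distinct_drop)
qed

lemma exists_longest_path:
  assumes fin: "finite F" and two: "\<forall>e\<in>F. card e = 2" and ne: "F \<noteq> {}"
  obtains xs where "walk F xs" "distinct xs" "2 \<le> length xs"
    "\<And>ys. walk F ys \<Longrightarrow> distinct ys \<Longrightarrow> 2 \<le> length ys \<Longrightarrow> length ys \<le> length xs"
proof -
  define S where "S = {xs. walk F xs \<and> distinct xs \<and> 2 \<le> length xs}"
  have "\<forall>e\<in>F. finite e"
    using two by (metis card.infinite zero_neq_numeral)
  then have "finite (\<Union>F)"
    using fin by blast
  moreover have "S \<subseteq> {xs. set xs \<subseteq> \<Union>F \<and> distinct xs}"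
    by (auto simp: S_def dest: walk_set_subset_Union)
  ultimately have "finite S"
    using finite_subset finite_subset_distinct by blast
  obtain a b where "{a, b} \<in> F" "a \<noteq> b"
    using ne two by (metis card_2_iff ex_in_conv)
  then have "[a, b] \<in> S"
    by (simp add: S_def)
  then have "Max (length ` S) \<in> length ` S"
    using \<open>finite S\<close> by (intro Max_in) auto
  then obtain xs where "xs \<in> S" and xs_Max: "length xs = Max (length ` S)"
    by (metis imageE)
  moreover have "length ys \<le> length xs" if "ys \<in> S" for ys
    unfolding xs_Max using \<open>finite S\<close> that by simp
  ultimately show ?thesis
    using that by (auto simp: S_def)
qed

text \<open>The last vertex of a longest path has a second edge by parity; by maximality its other end
  lies on the path, which closes a cycle.\<close>
lemma even_degrees_has_cycle:
  assumes fin: "finite F" and ne: "F \<noteq> {}" and two: "\<forall>e\<in>F. card e = 2" and ev: "even_degrees F"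
  shows "\<exists>xs. is_cycle F xs"
proof -
  obtain xs where xs: "walk F xs" "distinct xs" "2 \<le> length xs"
    and longest: "\<And>ys. walk F ys \<Longrightarrow> distinct ys \<Longrightarrow> 2 \<le> length ys \<Longrightarrow> length ys \<le> length xs"
    using exists_longest_path[OF fin two ne] by blast
  let ?L = "length xs"
  define u where "u = xs ! (?L - 2)"
  have "xs \<noteq> []"
    using xs(3) by auto
  then have last_xs: "last xs = xs ! (?L - 1)"
    by (simp add: last_conv_nth)
  have "?L - 2 + 1 < ?L" "?L - 2 + 1 = ?L - 1"
    using xs(3) by simp_all
  then have "{u, last xs} \<in> F"
    using xs(1) last_xs unfolding walk_def u_def by metis
  then obtain e where e: "e \<in> F" "last xs \<in> e" "e \<noteq> {u, last xs}"
    using fin ev even_deg_other_edge unfolding even_degrees_def by metis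
  obtain c d where "e = {c, d}" "c \<noteq> d"
    using two e(1) card_2_iff by metis
  then obtain w where ew: "e = {last xs, w}" "w \<noteq> last xs"
    using e(2) by (metis doubleton_eq_iff empty_iff insert_iff)
  have "w \<in> set xs"
  proof (rule ccontr)
    assume "w \<notin> set xs"
    then have "walk F (xs @ [w])" "distinct (xs @ [w])"
      using walk_append[OF xs(1), of "[last xs, w]"] e(1) ew xs(2) by simp_all
    then show False
      using longest[of "xs @ [w]"] xs(3) by simp
  qed
  then obtain j where j: "j < ?L" "xs ! j = w"
    by (auto simp: in_set_conv_nth)
  have "j \<noteq> ?L - 1" "j \<noteq> ?L - 2"
    using j ew e(3) last_xs u_def by auto
  then have "j + 3 \<le> ?L"
    using j xs(3) by linarith
  then have "is_cycle F (drop j xs)"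
    using is_cycle_drop xs e(1) ew j by simp
  then show ?thesis ..
qed

lemma girth_le_card_even_subgraph:
  assumes "X \<subseteq> H" "finite X" "X \<noteq> {}" "\<forall>e\<in>X. card e = 2" "even_degrees X"
    and "enat g \<le> girth H"
  shows "g \<le> card X"
proof -
  obtain xs where "is_cycle X xs"
    using even_degrees_has_cycle assms(2-5) by blast
  then have "g \<le> length xs" "length xs \<le> card X"
    using assms(1,2,6) is_cycle_mono length_cycle_le_card by (auto simp: enat_le_girth_iff)
  then show ?thesis
    by linarith
qed

text \<open>Every element of A \<union> B \<union> C lies in exactly four of the seven sets.\<close>
lemma card_sym_diff_combinations:
  assumes "finite A" "finite B" "finite C"
  shows "card A + card B + card C + card (sym_diff A B) + card (sym_diff A C) + card (sym_diff B C)
           + card (sym_diff (sym_diff A B) C) = 4 * card (A \<union> B \<union> C)"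
proof -
  let ?U = "A \<union> B \<union> C"
  let ?i = "\<lambda>X x. if x \<in> X then 1 else (0::nat)"
  have card_eq: "card X = (\<Sum>x\<in>?U. ?i X x)" if "X \<subseteq> ?U" for X
    using that assms by (simp add: sum.If_cases Int_absorb1)
  have "A \<subseteq> ?U" "B \<subseteq> ?U" "C \<subseteq> ?U" "sym_diff A B \<subseteq> ?U" "sym_diff A C \<subseteq> ?U"
    "sym_diff B C \<subseteq> ?U" "sym_diff (sym_diff A B) C \<subseteq> ?U"
    by blast+
  note cards = this[THEN card_eq]
  have "card A + card B + card C + card (sym_diff A B) + card (sym_diff A C) + card (sym_diff B C)
          + card (sym_diff (sym_diff A B) C)
        = (\<Sum>x\<in>?U. ?i A x + ?i B x + ?i C x + ?i (sym_diff A B) x + ?i (sym_diff A C) x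
                   + ?i (sym_diff B C) x + ?i (sym_diff (sym_diff A B) C) x)"
    by (simp only: cards sum.distrib)
  also have "\<dots> = (\<Sum>x\<in>?U. 4)"
    by (rule sum.cong) auto
  finally show ?thesis
    by simp
qed

section \<open>Spanning trees\<close>

text \<open>p v is the parent of v in a breadth-first search tree of H rooted at r, and d is the depth.\<close>
definition tree_parents :: "nat set \<Rightarrow> nat set set \<Rightarrow> nat \<Rightarrow> (nat \<Rightarrow> nat) \<Rightarrow> (nat \<Rightarrow> nat) \<Rightarrow> bool" where
  "tree_parents V H r p d \<longleftrightarrow> d r = 0 \<and> (\<forall>v\<in>V - {r}. p v \<in> V \<and> {v, p v} \<in> H \<and> Suc (d (p v)) = d v)"

definition tree_edges :: "nat set \<Rightarrow> nat \<Rightarrow> (nat \<Rightarrow> nat) \<Rightarrow> nat set set" where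
  "tree_edges V r p = (\<lambda>v. {v, p v}) ` (V - {r})"

lemma exists_tree_parents:
  assumes "connected_graph V H" "r \<in> V"
  shows "\<exists>p d. tree_parents V H r p d"
proof -
  define d where "d v = the_enat (gdist H v r)" for v
  have gd: "gdist H v r = enat (d v)" if "v \<in> V" for v
  proof -
    have "gdist H v r < \<infinity>"
      using assms that by (simp add: connected_graph_def)
    then show ?thesis
      by (cases "gdist H v r") (auto simp: d_def)
  qed
  have "\<exists>w. w \<in> V \<and> {v, w} \<in> H \<and> Suc (d w) = d v" if v: "v \<in> V" "v \<noteq> r" for v
  proof -
    have "d v \<noteq> 0"
      using gdist_eq_0D[of H v r] gd[OF v(1)] v(2) by (auto simp: zero_enat_def)
    then obtain m where m: "d v = Suc m"
      using not0_implies_Suc by blast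
    then obtain w where w: "{v, w} \<in> H" "gdist H w r = enat m"
      using gdist_SucE gd[OF v(1)] by metis
    moreover have "w \<in> V"
      using simple_graph_edge_subset assms(1) w(1) unfolding connected_graph_def by blast
    moreover have "d w = m"
      using gd[OF \<open>w \<in> V\<close>] w(2) by simp
    ultimately show ?thesis
      using m by (intro exI[of _ w]) simp
  qed
  then have "\<forall>v\<in>V - {r}. \<exists>w. w \<in> V \<and> {v, w} \<in> H \<and> Suc (d w) = d v"
    by blast
  from bchoice[OF this] obtain p where "\<forall>v\<in>V - {r}. p v \<in> V \<and> {v, p v} \<in> H \<and> Suc (d (p v)) = d v"
    by blast
  moreover have "d r = 0"
    using gd[OF assms(2)] gdist_self by (simp add: zero_enat_def)
  ultimately show ?thesis
    unfolding tree_parents_def by blast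
qed

lemma tree_edges_subset: "tree_parents V H r p d \<Longrightarrow> tree_edges V r p \<subseteq> H"
  unfolding tree_parents_def tree_edges_def by auto

lemma card_tree_edges:
  assumes "tree_parents V H r p d" "finite V" "r \<in> V"
  shows "card (tree_edges V r p) = card V - 1"
proof -
  have "inj_on (\<lambda>v. {v, p v}) (V - {r})"
  proof (rule inj_onI, rule ccontr)
    fix x y assume xy: "x \<in> V - {r}" "y \<in> V - {r}" "{x, p x} = {y, p y}" "x \<noteq> y"
    then have "x = p y" "y = p x"
      by (auto simp: doubleton_eq_iff)
    moreover have "Suc (d (p x)) = d x" "Suc (d (p y)) = d y"
      using assms(1) xy(1,2) by (auto simp: tree_parents_def)
    ultimately show False
      by simp
  qed
  then show ?thesis
    using assms(2,3) by (simp add: tree_edges_def card_image)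
qed

lemma card_le_Suc_card_edges:
  assumes "connected_graph V H" "finite V" "finite H"
  shows "card V \<le> card H + 1"
proof (cases "V = {}")
  case False
  then obtain r where r: "r \<in> V"
    by blast
  then obtain p d where T: "tree_parents V H r p d"
    using exists_tree_parents assms(1) by blast
  then have "card (tree_edges V r p) \<le> card H"
    using card_mono[OF assms(3) tree_edges_subset] by blast
  then show ?thesis
    using card_tree_edges[OF T assms(2) r] by linarith
qed simp

lemma tree_parents_Suc:
  assumes "tree_parents V H r p d" "a \<in> V" "d a = Suc i"
  shows "a \<noteq> r" "p a \<in> V" "d (p a) = i" "a \<noteq> p a"
proof -
  show "a \<noteq> r"
    using assms by (auto simp: tree_parents_def)
  then have "p a \<in> V" "Suc (d (p a)) = d a"
    using assms(1,2) by (auto simp: tree_parents_def)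
  then show "p a \<in> V" "d (p a) = i" "a \<noteq> p a"
    using assms(3) by auto
qed

fun tree_path :: "(nat \<Rightarrow> nat) \<Rightarrow> nat \<Rightarrow> nat \<Rightarrow> nat set set" where
  "tree_path p 0 a = {}"
| "tree_path p (Suc i) a = insert {a, p a} (tree_path p i (p a))"

lemma finite_tree_path [simp]: "finite (tree_path p i a)"
  by (induction i arbitrary: a) auto

lemma tree_path_subset:
  assumes "tree_parents V H r p d" "a \<in> V" "d a = i"
  shows "tree_path p i a \<subseteq> (\<lambda>x. {x, p x}) ` {x \<in> V - {r}. d x \<le> i}"
  using assms(2,3)
proof (induction i arbitrary: a)
  case (Suc i)
  note a = tree_parents_Suc[OF assms(1) Suc.prems]
  have "tree_path p i (p a) \<subseteq> (\<lambda>x. {x, p x}) ` {x \<in> V - {r}. d x \<le> i}"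
    using Suc.IH a(2,3) by blast
  also have "\<dots> \<subseteq> (\<lambda>x. {x, p x}) ` {x \<in> V - {r}. d x \<le> Suc i}"
    by (intro image_mono) auto
  finally show ?case
    using a(1) Suc.prems by auto
qed simp

lemma even_deg_tree_path:
  assumes "tree_parents V H r p d" "a \<in> V" "d a = i"
  shows "even (deg (tree_path p i a) v) \<longleftrightarrow> (v = a \<longleftrightarrow> v = r)"
  using assms(2,3)
proof (induction i arbitrary: a)
  case 0
  show ?case
  proof (cases "a = r")
    case False
    then have "Suc (d (p a)) = d a"
      using assms(1) 0(1) by (simp add: tree_parents_def)
    then show ?thesis
      using 0(2) by simp
  qed (simp add: deg_def)
next
  case (Suc i)
  note a = tree_parents_Suc[OF assms(1) Suc.prems]
  have "{a, p a} \<notin> tree_path p i (p a)"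
  proof
    assume "{a, p a} \<in> tree_path p i (p a)"
    then obtain x where x: "{a, p a} = {x, p x}" "x \<in> V - {r}" "d x \<le> i"
      using tree_path_subset[OF assms(1) a(2,3)] by blast
    then have "Suc (d (p x)) = d x"
      using assms(1) by (simp add: tree_parents_def)
    then show False
      using x a(3) Suc.prems(2) by (auto simp: doubleton_eq_iff)
  qed
  then have "deg (tree_path p (Suc i) a) v = deg (tree_path p i (p a)) v + (if v \<in> {a, p a} then 1 else 0)"
    by (simp add: deg_insert)
  then show ?case
    using Suc.IH[OF a(2,3)] a(1,4) by (cases "v = a"; cases "v = p a") auto
qed

text \<open>The fundamental cycle of a non-tree edge {a, b}, in its edge-set form: the symmetric difference
  of the two root paths and the edge itself.\<close>
lemma fundamental_even_subgraph:
  assumes T: "tree_parents V H r p d" and "simple_graph V H" "e \<in> H - tree_edges V r p"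
  shows "\<exists>Z. finite Z \<and> Z \<subseteq> insert e (tree_edges V r p) \<and> e \<in> Z \<and> even_degrees Z"
proof -
  obtain a b where ab: "e = {a, b}" "a \<noteq> b" "a \<in> V" "b \<in> V"
    using assms(2,3) simple_graph_edgeE by blast
  let ?P = "\<lambda>x. tree_path p (d x) x"
  have P_tree: "?P x \<subseteq> tree_edges V r p" if "x \<in> V" for x
  proof -
    have "(\<lambda>x. {x, p x}) ` {y \<in> V - {r}. d y \<le> d x} \<subseteq> tree_edges V r p"
      unfolding tree_edges_def by (rule image_mono) blast
    then show ?thesis
      using tree_path_subset[OF T that refl] by (rule order_trans[rotated])
  qed
  define Z where "Z = sym_diff (sym_diff (?P a) (?P b)) {e}"
  have "Z \<subseteq> insert e (?P a \<union> ?P b)"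
    unfolding Z_def by blast
  then have "Z \<subseteq> insert e (tree_edges V r p)"
    using P_tree[OF ab(3)] P_tree[OF ab(4)] by blast
  moreover have "e \<in> Z"
    using P_tree[OF ab(3)] P_tree[OF ab(4)] assms(3) unfolding Z_def by blast
  moreover have "even (deg Z v)" for v
  proof -
    have "even (deg Z v) \<longleftrightarrow> ((even (deg (?P a) v) \<longleftrightarrow> even (deg (?P b) v)) \<longleftrightarrow> even (deg {e} v))"
      unfolding Z_def by (simp add: even_deg_sym_diff)
    then show ?thesis
      using even_deg_tree_path[OF T ab(3) refl, of v] even_deg_tree_path[OF T ab(4) refl, of v] ab(1,2)
      by (cases "v = a"; cases "v = b") (auto simp: deg_singleton)
  qed
  moreover have "finite Z"
    by (simp add: Z_def)
  ultimately show ?thesis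
    unfolding even_degrees_def by blast
qed

section \<open>Few edges from large girth\<close>

text \<open>The private edges e1, e2, e3 make Z1, Z2, Z3 and their four nontrivial symmetric
  differences nonempty.\<close>
lemma girth_bound_three_even_subgraphs:
  assumes girth: "enat g \<le> girth H" and two: "\<forall>e\<in>H. card e = 2"
    and Z: "Z1 \<subseteq> H" "Z2 \<subseteq> H" "Z3 \<subseteq> H" "finite Z1" "finite Z2" "finite Z3"
    and even: "even_degrees Z1" "even_degrees Z2" "even_degrees Z3"
    and e: "e1 \<in> Z1 - Z2 - Z3" "e2 \<in> Z2 - Z1 - Z3" "e3 \<in> Z3 - Z1 - Z2"
  shows "7 * g \<le> 4 * card (Z1 \<union> Z2 \<union> Z3)"
proof -
  have bound: "g \<le> card X" if "X \<subseteq> H" "finite X" "X \<noteq> {}" "even_degrees X" for X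
    using girth_le_card_even_subgraph[OF that(1,2,3) _ that(4) girth] two that(1) by blast
  have "g \<le> card Z1" "g \<le> card Z2" "g \<le> card Z3"
    using bound Z even e by blast+
  moreover have "g \<le> card (sym_diff Z1 Z2)" "g \<le> card (sym_diff Z1 Z3)" "g \<le> card (sym_diff Z2 Z3)"
    using Z even e by (intro bound; auto simp: even_degrees_sym_diff)+
  moreover have "g \<le> card (sym_diff (sym_diff Z1 Z2) Z3)"
    using Z even e by (intro bound; auto simp: even_degrees_sym_diff)
  ultimately show ?thesis
    using card_sym_diff_combinations[OF Z(4-6)] by linarith
qed

lemma card_edges_le_of_girth:
  assumes conn: "connected_graph V H" and "finite V" and girth: "enat g \<le> girth H"
    and large: "4 * (card V + 2) < 7 * g"
  shows "card H \<le> card V + 1"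
proof (rule ccontr)
  assume "\<not> card H \<le> card V + 1"
  then have many: "card V + 2 \<le> card H"
    by simp
  have sg: "simple_graph V H"
    using conn by (simp add: connected_graph_def)
  have "finite H"
    using simple_graph_finite_edges sg assms(2) by blast
  have "V \<noteq> {}"
    using many sg by (auto simp: simple_graph_def)
  then obtain r where r: "r \<in> V"
    by blast
  then obtain p d where T: "tree_parents V H r p d"
    using exists_tree_parents conn by blast
  let ?T = "tree_edges V r p"
  have "0 < card V"
    using r assms(2) card_gt_0_iff by blast
  then have "?T \<subseteq> H" "card ?T + 1 = card V"
    using tree_edges_subset[OF T] card_tree_edges[OF T assms(2) r] by simp_all
  then have "3 \<le> card (H - ?T)"
    using many \<open>finite H\<close> by (simp add: card_Diff_subset finite_subset)
  then obtain e1 e2 e3 where e: "{e1, e2, e3} \<subseteq> H - ?T" "e1 \<noteq> e2" "e2 \<noteq> e3" "e1 \<noteq> e3"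
    by (metis obtain_subset_with_card_n card_3_iff)
  obtain Z1 Z2 Z3 where
    "finite Z1" "Z1 \<subseteq> insert e1 ?T" "e1 \<in> Z1" "even_degrees Z1"
    "finite Z2" "Z2 \<subseteq> insert e2 ?T" "e2 \<in> Z2" "even_degrees Z2"
    "finite Z3" "Z3 \<subseteq> insert e3 ?T" "e3 \<in> Z3" "even_degrees Z3"
    using fundamental_even_subgraph[OF T sg] e(1) by (metis insert_subset)
  then have "7 * g \<le> 4 * card (Z1 \<union> Z2 \<union> Z3)"
    using e \<open>?T \<subseteq> H\<close> simple_graph_card_edge[OF sg]
    by (intro girth_bound_three_even_subgraphs[OF girth]) auto
  moreover have "card (Z1 \<union> Z2 \<union> Z3) \<le> card (?T \<union> {e1, e2, e3})"
    using \<open>Z1 \<subseteq> _\<close> \<open>Z2 \<subseteq> _\<close> \<open>Z3 \<subseteq> _\<close> \<open>finite H\<close> \<open>?T \<subseteq> H\<close>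
    by (intro card_mono) (auto intro: finite_subset)
  moreover have "card (?T \<union> {e1, e2, e3}) \<le> card ?T + 3"
    using card_Un_le[of ?T "{e1, e2, e3}"] e(2-4) by simp
  ultimately show False
    using large \<open>card ?T + 1 = card V\<close> by simp
qed

lemma OPT_attained:
  assumes "finite E" "is_spanner V E k H"
  obtains H' where "is_spanner V E k H'" "card H' = OPT V E k"
proof -
  have "{H. is_spanner V E k H} \<subseteq> Pow E"
    by (auto simp: is_spanner_def)
  then have "finite (card ` {H. is_spanner V E k H})"
    using assms(1) finite_subset by blast
  moreover have "card H \<in> card ` {H. is_spanner V E k H}"
    using assms(2) by blast
  ultimately have "OPT V E k \<in> card ` {H. is_spanner V E k H}"
    unfolding OPT_def by (intro Min_in) auto
  then show ?thesis
    using that by (metis (mono_tags) imageE mem_Collect_eq)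
qed

lemma card_le_Suc_OPT:
  assumes conn: "connected_graph V E" and "finite V" "is_spanner V E k H"
  shows "card V \<le> OPT V E k + 1"
proof -
  have "finite E"
    using conn assms(2) simple_graph_finite_edges by (auto simp: connected_graph_def)
  then obtain H' where H': "is_spanner V E k H'" "card H' = OPT V E k"
    using assms(3) by (rule OPT_attained)
  then have "finite H'"
    using \<open>finite E\<close> finite_subset by (auto simp: is_spanner_def)
  then show ?thesis
    using card_le_Suc_card_edges[OF connected_graph_spanner[OF conn H'(1)] assms(2)] H'(2) by simp
qed

lemma approx_good_2_3:
  assumes "1 \<le> k" "4 * (n + 2) < 7 * (k + 2)"
  shows "approx_good 2 3 n k"
  unfolding approx_good_def
proof (intro allI impI)
  fix E assume conn: "connected_graph {0..<n} E"
  then have "finite E"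
    using simple_graph_finite_edges by (auto simp: connected_graph_def)
  then obtain H where H: "is_spanner {0..<n} E k H" "enat (k + 2) \<le> girth H"
    using exists_spanner_girth assms(1) by blast
  have "card H \<le> n + 1"
    using card_edges_le_of_girth[OF connected_graph_spanner[OF conn H(1)] _ H(2)] assms(2) by simp
  moreover have "n \<le> OPT {0..<n} E k + 1"
    using card_le_Suc_OPT[OF conn _ H(1)] by simp
  ultimately have "real (card H) \<le> real n + 1" "real n \<le> real (OPT {0..<n} E k) + 1"
    by simp_all
  then have "real (card H) - real n \<le> 2 * (real (OPT {0..<n} E k) - real n) + 3"
    by argo
  then show "\<exists>H. is_spanner {0..<n} E k H \<and> enat (k + 2) \<le> girth H \<and>
      real (card H) - real n \<le> 2 * (real (OPT {0..<n} E k) - real n) + 3"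
    using H by blast
qed

theorem corollary1p13:
  shows "\<exists>c \<beta> :: real. c \<ge> 0 \<and> \<beta> \<ge> 0 \<and>
    (\<exists>N. \<forall>n \<ge> N. \<forall>k :: nat. real k > 4 / 7 * real n + c \<longrightarrow> approx_good 2 \<beta> n k)"
proof -
  have "approx_good 2 3 n k" if "real k > 4 / 7 * real n + 0" for n k :: nat
  proof -
    have "4 * n < 7 * k"
      using that by linarith
    then show ?thesis
      by (intro approx_good_2_3) auto
  qed
  then show ?thesis
    by (intro exI[of _ "0 :: real"] exI[of _ "3 :: real"] exI[of _ "0 :: nat"]) auto
qed

end
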